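(* Let $\theta:H\to H$ be an endomorphism and $E_1,\dots,E_t$ $n$-ary Endo-primary hyperideals of $H$ associated with $\theta$ such that $rad(E_j)=rad(E_l)$ for all $j,l\in\{1,\dots,t\}$. Then $\bigcap_{j=1}^tE_j$ is an $n$-ary Endo-primary hyperideal of $H$ associated with $\theta$.
   Context: Throughout, $(H,h,k)$ is a commutative Krasner $(m,n)$-hyperring with scalar identity $1_H$: $(H,h)$ is a canonical $m$-ary hypergroup (a commutative associative $m$-ary hyperoperation $h:H^m\to\mathcal P^*(H)$ with a unique zero $0$ such that $h(u,0^{(m-1)})=\{u\}$, unique inverses, reversibility), $k:H^n\to H$ is a commutative associative $n$-ary operation distributing over $h$ in each argument, $k(0,u_2^n)=0$, and $k(u,1_H^{(n-1)})=u$ for all $u$. Notation: $u_i^j$ denotes $u_i,\dots,u_j$ (empty if $j<i$); $u^{(t)}$ denotes $u$ repeated $t$ times; for $r=l(n-1)+1$, $k_{(l)}(u_1^r)=k(k(\cdots k(k(u_1^n),u_{n+1}^{2n-1})\cdots),u_{r-n+1}^{r})$. A hyperideal is a nonempty $I\subseteq H$ such that $(I,h)$ is an $m$-ary subhypergroup and $k(u_1^{i-1},I,u_{i+1}^n)\subseteq I$ for all $u_j\in H$. An endomorphism is a map $\theta$ with $\theta(h(u_1^m))=h(\theta(u_1),\dots,\theta(u_m))$, $\theta(k(u_1^n))=k(\theta(u_1),\dots,\theta(u_n))$, $\theta(1_H)=1_H$. $rad(E)$ is the set of $u$ with $k(u^{(r)},1_H^{(n-r)})\in E$ for some $r\le n$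 or $k_{(l)}(u^{(r)})\in E$ for some $r=l(n-1)+1>n$ (equivalently the intersection of all $n$-ary prime hyperideals containing $E$). A proper hyperideal $E$ is an $n$-ary Endo-primary hyperideal associated with $\theta$ if for all $u_1,\dots,u_n\in H$, $k(u_1^n)\in E$ implies that for some $i$, $u_i\in E$ or $\theta\big(k(u_1^{i-1},1_H,u_{i+1}^n)\big)\in rad(E)$. *)

theory Defs
  imports Main "HOL-Library.Multiset"
begin

text \<open>The hyperring is the whole type 'a. The m-ary hyperoperation h is applied
to lists of length m, the n-ary operation k to lists of length n.
z is the zero of (H,h), e the scalar identity 1_H.\<close>

definition hset :: "('a list \<Rightarrow> 'a set) \<Rightarrow> 'a set list \<Rightarrow> 'a set" where
  "hset h As = \<Union> {h xs | xs. list_all2 (\<in>) xs As}"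

definition hinv :: "nat \<Rightarrow> ('a list \<Rightarrow> 'a set) \<Rightarrow> 'a \<Rightarrow> 'a \<Rightarrow> 'a" where
  "hinv m h z x = (THE y. z \<in> h (x # y # replicate (m - 2) z))"

definition canonical_hypergroup :: "nat \<Rightarrow> ('a list \<Rightarrow> 'a set) \<Rightarrow> 'a \<Rightarrow> bool" where
  "canonical_hypergroup m h z \<longleftrightarrow>
     m \<ge> 2 \<and>
     (\<forall>xs. length xs = m \<longrightarrow> h xs \<noteq> {}) \<and>
     (\<forall>xs i j. length xs = 2 * m - 1 \<and> i < m \<and> j < m \<longrightarrow>
        hset h (map (\<lambda>x. {x}) (take i xs) @ [h (take m (drop i xs))] @ map (\<lambda>x. {x}) (drop (i + m) xs))
      = hset h (map (\<lambda>x. {x}) (take j xs) @ [h (take m (drop j xs))] @ map (\<lambda>x. {x}) (drop (j + m) xs))) \<and>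
     (\<forall>xs ys. length xs = m \<and> mset xs = mset ys \<longrightarrow> h xs = h ys) \<and>
     (\<forall>x. h (x # replicate (m - 1) z) = {x}) \<and>
     (\<forall>z'. (\<forall>x. h (x # replicate (m - 1) z') = {x}) \<longrightarrow> z' = z) \<and>
     (\<forall>x. \<exists>!y. z \<in> h (x # y # replicate (m - 2) z)) \<and>
     (\<forall>x xs i. length xs = m \<and> i < m \<and> x \<in> h xs \<longrightarrow>
        xs ! i \<in> h ((map (hinv m h z) xs)[i := x]))"

definition krasner_hyperring ::
  "nat \<Rightarrow> nat \<Rightarrow> ('a list \<Rightarrow> 'a set) \<Rightarrow> ('a list \<Rightarrow> 'a) \<Rightarrow> 'a \<Rightarrow> 'a \<Rightarrow> bool" where
  "krasner_hyperring m n h k z e \<longleftrightarrow>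
     canonical_hypergroup m h z \<and> n \<ge> 2 \<and>
     (\<forall>xs i j. length xs = 2 * n - 1 \<and> i < n \<and> j < n \<longrightarrow>
        k (take i xs @ [k (take n (drop i xs))] @ drop (i + n) xs)
      = k (take j xs @ [k (take n (drop j xs))] @ drop (j + n) xs)) \<and>
     (\<forall>xs ys. length xs = n \<and> mset xs = mset ys \<longrightarrow> k xs = k ys) \<and>
     (\<forall>xs ys i. length xs = n \<and> length ys = m \<and> i < n \<longrightarrow>
        (\<lambda>y. k (xs[i := y])) ` h ys = h (map (\<lambda>y. k (xs[i := y])) ys)) \<and>
     (\<forall>xs. length xs = n - 1 \<longrightarrow> k (z # xs) = z) \<and>
     (\<forall>x. k (x # replicate (n - 1) e) = x)"

definition hyperideal ::
  "nat \<Rightarrow> nat \<Rightarrow> ('a list \<Rightarrow> 'a set) \<Rightarrow> ('a list \<Rightarrow> 'a) \<Rightarrow> 'a \<Rightarrow> 'a set \<Rightarrow> bool" where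
  "hyperideal m n h k z I \<longleftrightarrow>
     I \<noteq> {} \<and>
     (\<forall>xs. length xs = m \<and> set xs \<subseteq> I \<longrightarrow> h xs \<subseteq> I) \<and>
     (\<forall>x\<in>I. hinv m h z x \<in> I) \<and>
     (\<forall>xs i. length xs = n \<and> i < n \<and> xs ! i \<in> I \<longrightarrow> k xs \<in> I)"

definition endomorphism ::
  "nat \<Rightarrow> nat \<Rightarrow> ('a list \<Rightarrow> 'a set) \<Rightarrow> ('a list \<Rightarrow> 'a) \<Rightarrow> 'a \<Rightarrow> ('a \<Rightarrow> 'a) \<Rightarrow> bool" where
  "endomorphism m n h k e \<theta> \<longleftrightarrow>
     (\<forall>xs. length xs = m \<longrightarrow> \<theta> ` h xs = h (map \<theta> xs)) \<and>
     (\<forall>xs. length xs = n \<longrightarrow> \<theta> (k xs) = k (map \<theta> xs)) \<and>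
     \<theta> e = e"

text \<open>k_(l)(u_1^r) for r = l(n-1)+1 (k_(0) of a single element is that element).\<close>
fun kl :: "nat \<Rightarrow> ('a list \<Rightarrow> 'a) \<Rightarrow> nat \<Rightarrow> 'a list \<Rightarrow> 'a" where
  "kl n k 0 xs = hd xs"
| "kl n k (Suc l) xs =
     k (kl n k l (take (length xs - (n - 1)) xs) # drop (length xs - (n - 1)) xs)"

definition hrad :: "nat \<Rightarrow> ('a list \<Rightarrow> 'a) \<Rightarrow> 'a \<Rightarrow> 'a set \<Rightarrow> 'a set" where
  "hrad n k e E = {u. (\<exists>r. 1 \<le> r \<and> r \<le> n \<and> k (replicate r u @ replicate (n - r) e) \<in> E)
                   \<or> (\<exists>l. l * (n - 1) + 1 > n \<and> kl n k l (replicate (l * (n - 1) + 1) u) \<in> E)}"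

definition endo_primary ::
  "nat \<Rightarrow> nat \<Rightarrow> ('a list \<Rightarrow> 'a set) \<Rightarrow> ('a list \<Rightarrow> 'a) \<Rightarrow> 'a \<Rightarrow> 'a \<Rightarrow> ('a \<Rightarrow> 'a) \<Rightarrow> 'a set \<Rightarrow> bool" where
  "endo_primary m n h k z e \<theta> E \<longleftrightarrow>
     hyperideal m n h k z E \<and> E \<noteq> UNIV \<and>
     (\<forall>us. length us = n \<and> k us \<in> E \<longrightarrow>
        (\<exists>i<n. us ! i \<in> E \<or> \<theta> (k (us[i := e])) \<in> hrad n k e E))"

end

theory Submission
  imports Defs
begin

(* Only the multiplicative structure matters. Padding with 1_H turns the n-ary product into a
   commutative monoid product, so rad(E) is the set of elements having some power in E, and a
   finite intersection of hyperideals with common radical P again has radical P.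
   The key fact is that for an Endo-primary E and a in rad(E) - E also theta(a) lies in rad(E):
   with r minimal such that a^r is in E, apply the Endo-primary condition to
   a^r = k(a, a^(r-1), 1_H, ..., 1_H); every choice of index yields theta(a^s) in rad(E), s >= 1.
   Now let k(u_1^n) lie in the intersection. Some E_j provides an index i with u_i in E_j
   (otherwise we are done). If u_i is missing from some E_l, then u_i lies in rad(E_l) - E_l,
   so theta(u_i) is in P, and hence so is theta(k(u_1^(i'-1), 1_H, u_(i'+1)^n)) for any i' /= i. *)

locale comm_nary_monoid =
  fixes n :: nat and k :: "'a list \<Rightarrow> 'a" and e :: 'a
  assumes arity: "n \<ge> 2"
    and assoc: "\<lbrakk>length xs = 2 * n - 1; i < n; j < n\<rbrakk> \<Longrightarrow>
        k (take i xs @ [k (take n (drop i xs))] @ drop (i + n) xs)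
      = k (take j xs @ [k (take n (drop j xs))] @ drop (j + n) xs)"
    and commute: "\<lbrakk>length xs = n; mset xs = mset ys\<rbrakk> \<Longrightarrow> k xs = k ys"
    and unit: "k (x # replicate (n - 1) e) = x"

lemma krasner_hyperring_comm_nary_monoid:
  "krasner_hyperring m n h k z e \<Longrightarrow> comm_nary_monoid n k e"
  unfolding krasner_hyperring_def comm_nary_monoid_def by blast

context comm_nary_monoid
begin

lemma arity_SucSuc:
  obtains N where "n = Suc (Suc N)"
  using arity by (metis add_2_eq_Suc le_Suc_ex)

definition mult :: "'a \<Rightarrow> 'a \<Rightarrow> 'a" where
  "mult x y = k (x # y # replicate (n - 2) e)"

definition listprod :: "'a list \<Rightarrow> 'a" where
  "listprod xs = foldr mult xs e"

definition npow :: "'a \<Rightarrow> nat \<Rightarrow> 'a" where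
  "npow x r = listprod (replicate r x)"

lemma mult_e: "mult x e = x"
proof -
  obtain N where n: "n = Suc (Suc N)" by (rule arity_SucSuc)
  show ?thesis
    unfolding mult_def using unit[of x] by (simp add: n)
qed

lemma mult_commute: "mult x y = mult y x"
  unfolding mult_def using arity by (intro commute) (simp_all add: add_mset_commute)

lemma e_mult: "mult e x = x"
  using mult_e mult_commute by metis

lemma mult_assoc: "mult (mult x y) w = mult x (mult y w)"
proof -
  obtain N where n: "n = Suc (Suc N)" by (rule arity_SucSuc)
  let ?L = "x # y # replicate N e @ w # replicate N e"
  have "k (take 0 ?L @ [k (take n (drop 0 ?L))] @ drop (0 + n) ?L)
      = k (take 1 ?L @ [k (take n (drop 1 ?L))] @ drop (1 + n) ?L)"
    by (rule assoc) (simp_all add: n)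
  moreover have "k (y # replicate N e @ [w]) = k (y # w # replicate N e)"
    by (rule commute) (simp_all add: n)
  ultimately show ?thesis
    unfolding mult_def by (simp add: n)
qed

lemma mult_left_commute: "mult x (mult y w) = mult y (mult x w)"
  by (metis mult_assoc mult_commute)

lemma listprod_Nil [simp]: "listprod [] = e"
  by (simp add: listprod_def)

lemma listprod_Cons [simp]: "listprod (x # xs) = mult x (listprod xs)"
  by (simp add: listprod_def)

lemma listprod_append: "listprod (xs @ ys) = mult (listprod xs) (listprod ys)"
  by (induction xs) (simp_all add: e_mult mult_assoc)

lemma listprod_replicate_e: "listprod (replicate r e) = e"
  by (induction r) (simp_all add: e_mult)

lemma listprod_nth:
  "i < length xs \<Longrightarrow> listprod xs = mult (xs ! i) (listprod (xs[i := e]))"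
proof (induction xs arbitrary: i)
  case Nil
  then show ?case by simp
next
  case (Cons x xs)
  then show ?case
    by (cases i) (simp_all add: e_mult mult_left_commute)
qed

lemma k_padded_eq_listprod:
  "length xs \<le> n \<Longrightarrow> k (xs @ replicate (n - length xs) e) = listprod xs"
proof (induction xs)
  case Nil
  have "replicate n e = e # replicate (n - 1) e"
    using arity by (cases n) simp_all
  then show ?case using unit[of e] by simp
next
  case (Cons x xs)
  obtain N where n: "n = Suc (Suc N)" by (rule arity_SucSuc)
  define d where "d = n - Suc (length xs)"
  have len: "n = Suc (length xs + d)"
    using Cons.prems by (simp add: d_def)
  let ?L = "x # xs @ replicate d e @ e # replicate N e"
  have assoc_L: "k (take 0 ?L @ [k (take n (drop 0 ?L))] @ drop (0 + n) ?L)
      = k (take 1 ?L @ [k (take n (drop 1 ?L))] @ drop (1 + n) ?L)"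
    by (rule assoc) (use len n in auto)
  have "k (x # xs @ replicate (n - length (x # xs)) e) = k (x # xs @ replicate d e)"
    using len by simp
  also have "\<dots> = k (k (x # xs @ replicate d e) # e # replicate N e)"
    using unit[of "k (x # xs @ replicate d e)"] n by simp
  also have "\<dots> = k (k (take n ?L) # drop n ?L)"
    using len by simp
  also have "\<dots> = k (x # k (take n (drop 1 ?L)) # drop (1 + n) ?L)"
    using assoc_L by simp
  also have "\<dots> = k (x # k (xs @ replicate (n - length xs) e) # replicate N e)"
    using len by (simp add: replicate_app_Cons_same)
  also have "\<dots> = mult x (listprod xs)"
    unfolding mult_def using Cons n by simp
  finally show ?case by simp
qed

lemma k_eq_listprod: "length xs = n \<Longrightarrow> k xs = listprod xs"
  using k_padded_eq_listprod[of xs] by simp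

lemma k_replicate_padded: "r \<le> n \<Longrightarrow> k (replicate r u @ replicate (n - r) e) = npow u r"
  using k_padded_eq_listprod[of "replicate r u"] by (simp add: npow_def)

lemma npow_0 [simp]: "npow x 0 = e"
  by (simp add: npow_def)

lemma npow_Suc: "npow x (Suc r) = mult x (npow x r)"
  by (simp add: npow_def)

lemma npow_1: "npow x 1 = x"
  by (simp add: npow_def mult_e)

lemma npow_add: "npow x (r + s) = mult (npow x r) (npow x s)"
  by (simp add: npow_def replicate_add listprod_append)

lemma npow_mult_distrib: "npow (mult x y) r = mult (npow x r) (npow y r)"
  by (induction r) (simp_all add: npow_Suc mult_e mult_assoc mult_left_commute)

lemma npow_mult: "npow x (r * s) = npow (npow x r) s"
  by (induction s) (simp_all add: npow_Suc npow_add)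

lemma kl_replicate: "kl n k l (replicate (l * (n - 1) + 1) u) = npow u (l * (n - 1) + 1)"
proof (induction l)
  case 0
  then show ?case by (simp add: npow_def mult_e)
next
  case (Suc l)
  have "kl n k (Suc l) (replicate (Suc l * (n - 1) + 1) u)
      = k (npow u (l * (n - 1) + 1) # replicate (n - 1) u)"
    using Suc.IH by (simp add: min_def)
  also have "\<dots> = mult (npow u (l * (n - 1) + 1)) (npow u (n - 1))"
    using arity by (simp add: k_eq_listprod npow_def)
  also have "\<dots> = npow u (l * (n - 1) + 1 + (n - 1))"
    by (simp only: npow_add)
  also have "\<dots> = npow u (Suc l * (n - 1) + 1)"
    by (simp add: add.commute)
  finally show ?case .
qed

definition absorbing :: "'a set \<Rightarrow> bool" where
  "absorbing I \<longleftrightarrow> (\<forall>xs i. length xs = n \<and> i < n \<and> xs ! i \<in> I \<longrightarrow> k xs \<in> I)"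

lemma absorbingD: "\<lbrakk>absorbing I; length xs = n; i < n; xs ! i \<in> I\<rbrakk> \<Longrightarrow> k xs \<in> I"
  unfolding absorbing_def by blast

lemma hyperideal_absorbing: "hyperideal m n h k z I \<Longrightarrow> absorbing I"
  unfolding hyperideal_def absorbing_def by blast

lemma absorbing_INT: "(\<And>j. j \<in> J \<Longrightarrow> absorbing (E j)) \<Longrightarrow> absorbing (\<Inter>j\<in>J. E j)"
  unfolding absorbing_def by blast

lemma absorbing_mult_left: "\<lbrakk>absorbing I; x \<in> I\<rbrakk> \<Longrightarrow> mult x y \<in> I"
  unfolding mult_def using arity by (intro absorbingD[of _ _ 0]) simp_all

lemma absorbing_unit_UNIV: "\<lbrakk>absorbing I; e \<in> I\<rbrakk> \<Longrightarrow> I = UNIV"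
  using absorbing_mult_left e_mult by (metis UNIV_eq_I)

lemma absorbing_npow_mono: "\<lbrakk>absorbing I; npow u r \<in> I; r \<le> s\<rbrakk> \<Longrightarrow> npow u s \<in> I"
  using npow_add[of u r "s - r"] absorbing_mult_left by (metis le_add_diff_inverse)

lemma hrad_iff_npow:
  assumes "absorbing I"
  shows "u \<in> hrad n k e I \<longleftrightarrow> (\<exists>r\<ge>1. npow u r \<in> I)"
proof
  assume "u \<in> hrad n k e I"
  then consider (short) r where "1 \<le> r" "r \<le> n" "k (replicate r u @ replicate (n - r) e) \<in> I"
    | (long) l where "kl n k l (replicate (l * (n - 1) + 1) u) \<in> I"
    unfolding hrad_def by blast
  then show "\<exists>r\<ge>1. npow u r \<in> I"
  proof cases
    case short
    then show ?thesis using k_replicate_padded by auto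
  next
    case long
    then show ?thesis using kl_replicate[of l u] le_add2 by metis
  qed
next
  assume "\<exists>r\<ge>1. npow u r \<in> I"
  then obtain r where r: "r \<ge> 1" "npow u r \<in> I" by blast
  show "u \<in> hrad n k e I"
  proof (cases "r \<le> n")
    case True
    then have "k (replicate r u @ replicate (n - r) e) \<in> I"
      using r k_replicate_padded by simp
    then show ?thesis unfolding hrad_def using r(1) True by blast
  next
    case False
    have "r \<le> r * (n - 1)" using arity by (simp add: Suc_le_eq)
    then have "npow u (r * (n - 1) + 1) \<in> I"
      using absorbing_npow_mono[OF assms r(2), of "r * (n - 1) + 1"] by linarith
    moreover have "r * (n - 1) + 1 > n" using False \<open>r \<le> r * (n - 1)\<close> by linarith
    ultimately show ?thesis unfolding hrad_def using kl_replicate[of r u] by auto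
  qed
qed

lemma hrad_mono: "I \<subseteq> I' \<Longrightarrow> hrad n k e I \<subseteq> hrad n k e I'"
  unfolding hrad_def by blast

lemma subset_hrad:
  assumes "absorbing I"
  shows "I \<subseteq> hrad n k e I"
proof
  fix x assume "x \<in> I"
  then have "npow x 1 \<in> I" by (simp only: npow_1)
  then show "x \<in> hrad n k e I" using hrad_iff_npow[OF assms] by blast
qed

lemma hrad_npowD:
  assumes I: "absorbing I" and "1 \<le> s" "npow x s \<in> hrad n k e I"
  shows "x \<in> hrad n k e I"
proof -
  obtain r where "1 \<le> r" "npow (npow x s) r \<in> I"
    using assms(3) hrad_iff_npow[OF I] by blast
  then have "1 \<le> s * r" "npow x (s * r) \<in> I"
    using \<open>1 \<le> s\<close> by (simp_all add: npow_mult)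
  then show ?thesis
    using hrad_iff_npow[OF I] by blast
qed

lemma absorbing_hrad:
  assumes I: "absorbing I"
  shows "absorbing (hrad n k e I)"
  unfolding absorbing_def
proof (intro allI impI)
  fix xs i
  assume xs: "length xs = n \<and> i < n \<and> xs ! i \<in> hrad n k e I"
  then obtain r where r: "r \<ge> 1" "npow (xs ! i) r \<in> I"
    using hrad_iff_npow[OF I] by blast
  have "k xs = mult (xs ! i) (listprod (xs[i := e]))"
    using xs k_eq_listprod listprod_nth by simp
  moreover have "npow (mult (xs ! i) (listprod (xs[i := e]))) r \<in> I"
    using r(2) I by (simp add: npow_mult_distrib absorbing_mult_left)
  ultimately show "k xs \<in> hrad n k e I"
    using hrad_iff_npow[OF I] r(1) by auto
qed

lemma hrad_INT:
  assumes "finite J" "J \<noteq> {}" and absorbing: "\<And>j. j \<in> J \<Longrightarrow> absorbing (E j)"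
  shows "hrad n k e (\<Inter>j\<in>J. E j) = (\<Inter>j\<in>J. hrad n k e (E j))"
proof
  show "hrad n k e (\<Inter>j\<in>J. E j) \<subseteq> (\<Inter>j\<in>J. hrad n k e (E j))"
    by (intro INT_greatest hrad_mono INT_lower)
next
  show "(\<Inter>j\<in>J. hrad n k e (E j)) \<subseteq> hrad n k e (\<Inter>j\<in>J. E j)"
  proof
    fix u assume u: "u \<in> (\<Inter>j\<in>J. hrad n k e (E j))"
    have "\<exists>r. r \<ge> 1 \<and> npow u r \<in> E j" if "j \<in> J" for j
      using u that hrad_iff_npow[OF absorbing[OF that]] by blast
    then have "\<forall>j\<in>J. \<exists>r. r \<ge> 1 \<and> npow u r \<in> E j" by blast
    from bchoice[OF this] obtain r where r: "\<forall>j\<in>J. r j \<ge> 1 \<and> npow u (r j) \<in> E j"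
      by blast
    define R where "R = Max (r ` J)"
    have R: "r j \<le> R" if "j \<in> J" for j
      unfolding R_def using assms(1) that by simp
    have "npow u R \<in> E j" if "j \<in> J" for j
      using r that R[OF that] by (auto intro: absorbing_npow_mono[OF absorbing[OF that], of u "r j"])
    then have "npow u R \<in> (\<Inter>j\<in>J. E j)" by blast
    moreover obtain j where "j \<in> J" using assms(2) by blast
    then have "R \<ge> 1" using r R[of j] by auto
    moreover have "absorbing (\<Inter>j\<in>J. E j)"
      using absorbing by (rule absorbing_INT)
    ultimately show "u \<in> hrad n k e (\<Inter>j\<in>J. E j)"
      using hrad_iff_npow by blast
  qed
qed

lemma endomorphism_mult: "endomorphism m n h k e \<theta> \<Longrightarrow> \<theta> (mult x y) = mult (\<theta> x) (\<theta> y)"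
  unfolding endomorphism_def mult_def using arity by simp

lemma endomorphism_npow:
  assumes "endomorphism m n h k e \<theta>"
  shows "\<theta> (npow x r) = npow (\<theta> x) r"
proof (induction r)
  case 0
  then show ?case using assms by (simp add: endomorphism_def)
next
  case (Suc r)
  then show ?case using endomorphism_mult[OF assms] by (simp add: npow_Suc)
qed

lemma hrad_obtain_threshold_npow:
  assumes I: "absorbing I" and "I \<noteq> UNIV" and a: "a \<in> hrad n k e I" "a \<notin> I"
  obtains s where "1 \<le> s" "npow a s \<notin> I" "npow a (Suc s) \<in> I"
proof -
  have e: "e \<notin> I" using absorbing_unit_UNIV assms(1,2) by blast
  obtain r where "npow a r \<in> I" using a(1) hrad_iff_npow[OF I] by blast
  define r0 where "r0 = (LEAST r. npow a r \<in> I)"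
  have r0: "npow a r0 \<in> I" unfolding r0_def by (rule LeastI) fact
  have below_r0: "npow a s \<notin> I" if "s < r0" for s
    using that not_less_Least unfolding r0_def by blast
  have "r0 \<noteq> 0" "r0 \<noteq> 1" using r0 e a(2) by (metis npow_0, metis npow_1)
  then obtain s where "r0 = Suc s" "1 \<le> s" by (cases r0) auto
  then show ?thesis using that r0 below_r0 by simp
qed

lemma endo_primary_hrad_image:
  assumes \<theta>: "endomorphism m n h k e \<theta>" and E: "endo_primary m n h k z e \<theta> E"
    and a: "a \<in> hrad n k e E" "a \<notin> E"
  shows "\<theta> a \<in> hrad n k e E"
proof -
  have I: "absorbing E" and "E \<noteq> UNIV"
    using E hyperideal_absorbing unfolding endo_primary_def by blast+
  then have e: "e \<notin> E" using absorbing_unit_UNIV by blast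
  obtain s where s: "1 \<le> s" "npow a s \<notin> E" "npow a (Suc s) \<in> E"
    using hrad_obtain_threshold_npow[OF I \<open>E \<noteq> UNIV\<close> a] .
  define vs where "vs = a # npow a s # replicate (n - 2) e"
  have len: "length vs = n" using arity by (simp add: vs_def)
  have k_vs: "k vs = npow a (Suc s)"
    using len by (simp add: k_eq_listprod vs_def listprod_replicate_e mult_e npow_Suc)
  obtain i where i: "i < n" "vs ! i \<in> E \<or> \<theta> (k (vs[i := e])) \<in> hrad n k e E"
    using E len k_vs s(3) unfolding endo_primary_def by metis
  consider "i = 0" | "i = 1" | "2 \<le> i" by linarith
  then have "vs ! i \<notin> E \<and> (\<exists>s'\<ge>1. k (vs[i := e]) = npow a s')"
  proof cases
    case 1
    then have "k (vs[i := e]) = npow a s"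
      using len by (simp add: vs_def k_eq_listprod listprod_replicate_e mult_e e_mult)
    then show ?thesis using 1 a(2) s(1) by (auto simp: vs_def)
  next
    case 2
    then have "k (vs[i := e]) = npow a 1"
      using len npow_1[of a] by (simp add: vs_def k_eq_listprod listprod_replicate_e mult_e)
    moreover have "vs ! i \<notin> E" using 2 s(2) by (simp add: vs_def)
    ultimately show ?thesis by blast
  next
    case 3
    then have "vs ! i = e" using i(1) by (simp add: vs_def nth_Cons')
    then show ?thesis using e k_vs by (auto simp: list_update_id[of vs i, simplified])
  qed
  then obtain s' where "1 \<le> s'" "npow (\<theta> a) s' \<in> hrad n k e E"
    using i(2) endomorphism_npow[OF \<theta>] by metis
  then show ?thesis using hrad_npowD[OF I] by blast
qed

lemma endomorphism_k_update_mem: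
  assumes "endomorphism m n h k e \<theta>" "absorbing I"
    and "length us = n" "i < n" "j < n" "i \<noteq> j" "\<theta> (us ! i) \<in> I"
  shows "\<theta> (k (us[j := e])) \<in> I"
proof -
  have "k (map \<theta> (us[j := e])) \<in> I"
    using assms(2-) by (intro absorbingD[of _ _ i]) simp_all
  then show ?thesis using assms(1,3) unfolding endomorphism_def by simp
qed

end

lemma hyperideal_zero:
  assumes "krasner_hyperring m n h k z e" and I: "hyperideal m n h k z I"
  shows "z \<in> I"
proof -
  interpret comm_nary_monoid n k e
    using assms(1) by (rule krasner_hyperring_comm_nary_monoid)
  obtain x where "x \<in> I" using I unfolding hyperideal_def by blast
  then have "k (z # x # replicate (n - 2) e) \<in> I"
    using hyperideal_absorbing[OF I] arity by (intro absorbingD[of _ _ 1]) simp_all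
  moreover have "k (z # x # replicate (n - 2) e) = z"
    using assms(1) arity unfolding krasner_hyperring_def by simp
  ultimately show ?thesis by simp
qed

lemma hyperideal_INT:
  assumes "krasner_hyperring m n h k z e" "J \<noteq> {}"
    and "\<And>j. j \<in> J \<Longrightarrow> hyperideal m n h k z (E j)"
  shows "hyperideal m n h k z (\<Inter>j\<in>J. E j)"
proof -
  have "z \<in> E j" if "j \<in> J" for j
    using hyperideal_zero[OF assms(1) assms(3)[OF that]] .
  then show ?thesis
    using assms(3) unfolding hyperideal_def by blast
qed

theorem endo_primary_INT:
  assumes KR: "krasner_hyperring m n h k z e" and \<theta>: "endomorphism m n h k e \<theta>"
    and J: "finite J" "J \<noteq> {}"
    and primary: "\<And>j. j \<in> J \<Longrightarrow> endo_primary m n h k z e \<theta> (E j)"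
    and same_hrad: "\<And>j l. j \<in> J \<Longrightarrow> l \<in> J \<Longrightarrow> hrad n k e (E j) = hrad n k e (E l)"
  shows "endo_primary m n h k z e \<theta> (\<Inter>j\<in>J. E j)"
proof -
  interpret comm_nary_monoid n k e
    using KR by (rule krasner_hyperring_comm_nary_monoid)
  obtain j0 where j0: "j0 \<in> J" using J(2) by blast
  define P where "P = hrad n k e (E j0)"
  have ideals: "hyperideal m n h k z (E j)" if "j \<in> J" for j
    using primary[OF that] unfolding endo_primary_def by blast
  then have absorbing: "absorbing (E j)" if "j \<in> J" for j
    using that hyperideal_absorbing by blast
  have hrad_P: "hrad n k e (E j) = P" if "j \<in> J" for j
    using same_hrad[OF that j0] unfolding P_def .
  have hrad_Inter: "hrad n k e (\<Inter>j\<in>J. E j) = P"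
    using hrad_INT[OF J absorbing] hrad_P J(2) by auto
  have "(\<Inter>j\<in>J. E j) \<noteq> UNIV"
    using primary[OF j0] j0 unfolding endo_primary_def by blast
  moreover have "\<exists>i<n. us ! i \<in> (\<Inter>j\<in>J. E j) \<or> \<theta> (k (us[i := e])) \<in> P"
    if us: "length us = n" "k us \<in> (\<Inter>j\<in>J. E j)" for us
  proof -
    obtain i where i: "i < n" "us ! i \<in> E j0 \<or> \<theta> (k (us[i := e])) \<in> P"
      using primary[OF j0] us j0 unfolding endo_primary_def P_def by blast
    consider "us ! i \<in> (\<Inter>j\<in>J. E j)" | "\<theta> (k (us[i := e])) \<in> P"
      | l where "l \<in> J" "us ! i \<in> E j0" "us ! i \<notin> E l"
      using i(2) by blast
    then show ?thesis
    proof cases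
      case 3
      then have "us ! i \<in> hrad n k e (E l)"
        using subset_hrad[OF absorbing[OF j0]] hrad_P[OF j0] hrad_P[OF \<open>l \<in> J\<close>] by blast
      then have "\<theta> (us ! i) \<in> P"
        using endo_primary_hrad_image[OF \<theta> primary] 3 hrad_P by blast
      moreover have "\<exists>i'<n. i' \<noteq> i"
        using arity by (intro exI[of _ "if i = 0 then 1 else 0"]) auto
      ultimately show ?thesis
        using endomorphism_k_update_mem[OF \<theta> absorbing_hrad[OF absorbing[OF j0]]] i(1) us(1)
        unfolding P_def by blast
    qed (use i in blast)+
  qed
  ultimately show ?thesis
    using hyperideal_INT[OF KR J(2) ideals] hrad_Inter unfolding endo_primary_def by auto
qed

theorem mainTheorem19:
  fixes h :: "'a list \<Rightarrow> 'a set" and k :: "'a list \<Rightarrow> 'a"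
    and z e :: 'a and \<theta> :: "'a \<Rightarrow> 'a" and E :: "nat \<Rightarrow> 'a set" and t m n :: nat
  assumes "krasner_hyperring m n h k z e"
    and "endomorphism m n h k e \<theta>"
    and "t \<ge> 1"
    and "\<forall>j\<in>{1..t}. endo_primary m n h k z e \<theta> (E j)"
    and "\<forall>j\<in>{1..t}. \<forall>l\<in>{1..t}. hrad n k e (E j) = hrad n k e (E l)"
  shows "endo_primary m n h k z e \<theta> (\<Inter>j\<in>{1..t}. E j)"
proof (rule endo_primary_INT[OF assms(1,2)])
  show "finite {1..t}" "{1..t} \<noteq> {}"
    using assms(3) by simp_all
qed (use assms(4,5) in blast)+

end
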